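(* Let $\pi:\mathrm{G}'\to\mathrm{G}$ be a surjective group homomorphism whose kernel $\mathrm{C}=\langle c\rangle$ has order $2$. Let $\Delta=\langle(c,c)\rangle\subseteq\mathrm{G}'\times\mathrm{G}'$. Let $\mathrm{H}$ be a subgroup of $\mathrm{G}$ and $\mathrm{H}_0=\{(h,h):h\in\mathrm{H}\}$ its diagonal embedding in $\mathrm{G}\times\mathrm{G}$. Then the pull-back of $\mathrm{H}_0$ under the natural surjection $(\mathrm{G}'\times\mathrm{G}')/\Delta\to\mathrm{G}\times\mathrm{G}$ is a trivial extension of $\mathrm{H}$ by $\mathrm{C}$ (i.e. isomorphic to $\mathrm{H}\times\mathrm{C}$ as an extension).
   Context: The kernel of the natural surjection $(\mathrm{G}'\times\mathrm{G}')/\Delta\to\mathrm{G}\times\mathrm{G}$ induced by $\pi\times\pi$ is the image of $\{(1,1),(1,c)\}$, identified with $\mathrm{C}$. *)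

theory Defs
  imports "HOL-Algebra.Algebra"
begin

text \<open>The natural map (G' x G')/Delta -> G x G induced by pi x pi, on cosets.\<close>
definition nat_sq_map :: "('a \<Rightarrow> 'b) \<Rightarrow> ('a \<times> 'a) set \<Rightarrow> 'b \<times> 'b" where
  "nat_sq_map f S = the_elem ((\<lambda>(x, y). (f x, f y)) ` S)"

definition diag :: "'b set \<Rightarrow> ('b \<times> 'b) set" where
  "diag H = {(h, h) | h. h \<in> H}"

end

(*
  The kernel C of \<pi> is normal of order 2, hence central. On the preimage
  K = {(a, b). \<pi> a = \<pi> b \<in> H} of the diagonal of H the map (a, b) \<mapsto> (\<pi> a, a\<inverse> b)
  is therefore a homomorphism onto H \<times> C, multiplicative because a\<inverse> b is central, and
  its kernel is the diagonal of C, which is \<Delta>. The first isomorphism theorem gives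
  K/\<Delta> \<cong> H \<times> C, and K/\<Delta> is exactly the pull-back of H\<^sub>0 in (G' \<times> G')/\<Delta>.
*)
theory Submission
  imports Defs
begin

lemma diag_eq_image: "diag A = (\<lambda>x. (x, x)) ` A"
  by (auto simp: diag_def)

lemma (in group) normal_card_2_central:
  assumes "N \<lhd> G" and "card N = 2" and "x \<in> N" and "g \<in> carrier G"
  shows "g \<otimes> x = x \<otimes> g"
proof (cases "x = \<one>")
  case True
  with assms(4) show ?thesis by simp
next
  case False
  interpret N: normal N G by fact
  have x: "x \<in> carrier G" using assms(3) N.subset by blast
  obtain a b where "N = {a, b}"
    using assms(2) unfolding card_2_iff by blast
  then have N_eq: "N = {\<one>, x}"
    using assms(3) False N.one_closed by auto
  have "g \<otimes> x \<otimes> inv g \<in> N" using N.inv_op_closed2 assms(3,4) by blast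
  moreover have "g \<otimes> x \<otimes> inv g \<noteq> \<one>"
    using False x assms(4) by (simp add: inv_solve_right')
  ultimately have "g \<otimes> x \<otimes> inv g = x" using N_eq by blast
  then show ?thesis using x assms(4) by (simp add: inv_solve_right')
qed

lemma (in group) diag_group_hom: "group_hom G (G \<times>\<times> G) (\<lambda>x. (x, x))"
  by (intro group_hom.intro group_hom_axioms.intro is_group DirProd_group homI) auto

lemma (in group) generate_diag:
  assumes "K \<subseteq> carrier G"
  shows "generate (G \<times>\<times> G) (diag K) = diag (generate G K)"
  unfolding diag_eq_image using group_hom.generate_img[OF diag_group_hom assms] .

lemma (in group_hom) nat_sq_map_diag_kernel_coset:
  assumes "a \<in> carrier G" and "b \<in> carrier G"
  shows "nat_sq_map h (diag (kernel G H h) #>\<^bsub>G \<times>\<times> G\<^esub> (a, b)) = (h a, h b)"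
proof -
  let ?U = "diag (kernel G H h) #>\<^bsub>G \<times>\<times> G\<^esub> (a, b)"
  have "(\<one> \<otimes> a, \<one> \<otimes> b) \<in> ?U"
    by (force simp: r_coset_def diag_def kernel_def)
  moreover have "(\<lambda>(x, y). (h x, h y)) ` ?U \<subseteq> {(h a, h b)}"
    using assms by (auto simp: r_coset_def kernel_def diag_def)
  ultimately have "(\<lambda>(x, y). (h x, h y)) ` ?U = {(h a, h b)}"
    using assms by force
  then show ?thesis by (simp add: nat_sq_map_def)
qed

definition (in group_hom) diag_pullback :: "'c set \<Rightarrow> ('a \<times> 'a) set" where
  "diag_pullback S = {(a, b) \<in> carrier G \<times> carrier G. (h a, h b) \<in> diag S}"

definition (in group_hom) pullback_coords :: "'a \<times> 'a \<Rightarrow> 'c \<times> 'a" where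
  "pullback_coords = (\<lambda>(a, b). (h a, inv a \<otimes> b))"

lemma (in group_hom) subgroup_diag_pullback:
  assumes "subgroup S H"
  shows "subgroup (diag_pullback S) (G \<times>\<times> G)"
proof -
  interpret S: subgroup S H by fact
  interpret GG: group "G \<times>\<times> G" by (rule DirProd_group) (rule G.is_group)+
  show ?thesis
  proof (rule GG.subgroupI)
    fix x y assume "x \<in> diag_pullback S" "y \<in> diag_pullback S"
    then show "inv\<^bsub>G \<times>\<times> G\<^esub> x \<in> diag_pullback S" "x \<otimes>\<^bsub>G \<times>\<times> G\<^esub> y \<in> diag_pullback S"
      by (auto simp: diag_pullback_def diag_def G.is_group)
  next
    have "(\<one>, \<one>) \<in> diag_pullback S"
      by (simp add: diag_pullback_def diag_def)
    then show "diag_pullback S \<noteq> {}" by blast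
  qed (auto simp: diag_pullback_def)
qed

lemma (in group_hom) pullback_coords_mem:
  assumes "x \<in> diag_pullback S"
  shows "pullback_coords x \<in> S \<times> kernel G H h"
  using assms by (auto simp: diag_pullback_def diag_def pullback_coords_def kernel_def)

lemma (in group_hom) pullback_coords_hom:
  assumes central: "\<And>x g. x \<in> kernel G H h \<Longrightarrow> g \<in> carrier G \<Longrightarrow> g \<otimes> x = x \<otimes> g"
  shows "pullback_coords \<in> hom ((G \<times>\<times> G)\<lparr>carrier := diag_pullback S\<rparr>)
           (H\<lparr>carrier := S\<rparr> \<times>\<times> G\<lparr>carrier := kernel G H h\<rparr>)"
proof (rule homI)
  fix x assume "x \<in> carrier ((G \<times>\<times> G)\<lparr>carrier := diag_pullback S\<rparr>)"
  then show "pullback_coords x \<in> carrier (H\<lparr>carrier := S\<rparr> \<times>\<times> G\<lparr>carrier := kernel G H h\<rparr>)"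
    using pullback_coords_mem by simp
next
  fix x y assume "x \<in> carrier ((G \<times>\<times> G)\<lparr>carrier := diag_pullback S\<rparr>)"
    and "y \<in> carrier ((G \<times>\<times> G)\<lparr>carrier := diag_pullback S\<rparr>)"
  then obtain a b a' b' where xy: "x = (a, b)" "y = (a', b')"
    and ab: "a \<in> carrier G" "b \<in> carrier G" "a' \<in> carrier G" "b' \<in> carrier G"
    and k: "inv a \<otimes> b \<in> kernel G H h"
    using pullback_coords_mem by (fastforce simp: diag_pullback_def pullback_coords_def)
  have "inv (a \<otimes> a') \<otimes> (b \<otimes> b') = inv a' \<otimes> ((inv a \<otimes> b) \<otimes> b')"
    using ab by (simp add: G.inv_mult_group G.m_assoc)
  also have "\<dots> = (inv a \<otimes> b) \<otimes> (inv a' \<otimes> b')"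
    using central[OF k, of "inv a'"] ab by (simp flip: G.m_assoc)
  finally show "pullback_coords (x \<otimes>\<^bsub>(G \<times>\<times> G)\<lparr>carrier := diag_pullback S\<rparr>\<^esub> y)
      = pullback_coords x \<otimes>\<^bsub>H\<lparr>carrier := S\<rparr> \<times>\<times> G\<lparr>carrier := kernel G H h\<rparr>\<^esub> pullback_coords y"
    using ab by (simp add: xy pullback_coords_def)
qed

lemma (in group_hom) pullback_coords_image:
  assumes "S \<subseteq> h ` carrier G"
  shows "pullback_coords ` diag_pullback S = S \<times> kernel G H h"
proof
  show "pullback_coords ` diag_pullback S \<subseteq> S \<times> kernel G H h"
    using pullback_coords_mem by blast
  show "S \<times> kernel G H h \<subseteq> pullback_coords ` diag_pullback S"
  proof clarify
    fix s k assume s: "s \<in> S" and k: "k \<in> kernel G H h"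
    then obtain a where a: "a \<in> carrier G" "s = h a" using assms by blast
    have kG: "k \<in> carrier G" "h k = \<one>\<^bsub>H\<^esub>" using k by (auto simp: kernel_def)
    have "(a, a \<otimes> k) \<in> diag_pullback S"
      using a s kG by (simp add: diag_pullback_def diag_def)
    moreover have "pullback_coords (a, a \<otimes> k) = (s, k)"
      using a kG by (simp add: pullback_coords_def flip: G.m_assoc)
    ultimately show "(s, k) \<in> pullback_coords ` diag_pullback S" by force
  qed
qed

lemma (in group_hom) kernel_pullback_coords:
  assumes "subgroup S H"
  shows "kernel ((G \<times>\<times> G)\<lparr>carrier := diag_pullback S\<rparr>)
           (H\<lparr>carrier := S\<rparr> \<times>\<times> G\<lparr>carrier := kernel G H h\<rparr>) pullback_coords
         = diag (kernel G H h)"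
  using subgroup.one_closed[OF assms]
  by (auto simp: kernel_def diag_pullback_def diag_def pullback_coords_def G.inv_solve_left')

lemma (in group_hom) FactGroup_inv_iso:
  assumes "h ` carrier G = carrier H"
  obtains \<phi> where "\<phi> \<in> iso H (G Mod kernel G H h)"
    and "\<And>x. x \<in> carrier G \<Longrightarrow> \<phi> (h x) = kernel G H h #> x"
proof
  let ?K = "kernel G H h"
  have iso: "(\<lambda>U. the_elem (h ` U)) \<in> iso (G Mod ?K) H"
    using FactGroup_iso_set[OF assms] .
  interpret GK: group "G Mod ?K"
    using normal.factorgroup_is_group[OF normal_kernel] .
  show "inv_into (carrier (G Mod ?K)) (\<lambda>U. the_elem (h ` U)) \<in> iso H (G Mod ?K)"
    using GK.iso_set_sym[OF iso] .
  fix x assume x: "x \<in> carrier G"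
  have "h ` (?K #> x) = {h x}"
  proof
    show "h ` (?K #> x) \<subseteq> {h x}"
      using x by (auto simp: kernel_def r_coset_def)
    have "x \<in> ?K #> x"
      using x by (simp add: G.rcos_self subgroup_kernel)
    then show "{h x} \<subseteq> h ` (?K #> x)" by blast
  qed
  moreover have "?K #> x \<in> carrier (G Mod ?K)"
    using x by (auto simp: FactGroup_def RCOSETS_def)
  ultimately show "inv_into (carrier (G Mod ?K)) (\<lambda>U. the_elem (h ` U)) (h x) = ?K #> x"
    using FactGroup_inj_on by (simp add: inv_into_f_eq)
qed

lemma (in group_hom) FactGroup_diag_pullback:
  assumes "subgroup S H"
  shows "((G \<times>\<times> G) Mod diag (kernel G H h))
           \<lparr>carrier := {U \<in> carrier ((G \<times>\<times> G) Mod diag (kernel G H h)). nat_sq_map h U \<in> diag S}\<rparr>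
         = (G \<times>\<times> G)\<lparr>carrier := diag_pullback S\<rparr> Mod diag (kernel G H h)"
proof -
  let ?N = "diag (kernel G H h)"
  have "{U \<in> rcosets\<^bsub>G \<times>\<times> G\<^esub> ?N. nat_sq_map h U \<in> diag S}
        = (\<Union>x\<in>diag_pullback S. {?N #>\<^bsub>G \<times>\<times> G\<^esub> x})"
    using nat_sq_map_diag_kernel_coset by (auto simp: RCOSETS_def diag_pullback_def) blast
  moreover have "set_mult ((G \<times>\<times> G)\<lparr>carrier := diag_pullback S\<rparr>) = set_mult (G \<times>\<times> G)"
    by (simp add: set_mult_def fun_eq_iff)
  ultimately show ?thesis
    by (simp add: FactGroup_def RCOSETS_def r_coset_def)
qed

lemma (in group_hom) FactGroup_diag_pullback_iso:
  assumes "subgroup S H" and "S \<subseteq> h ` carrier G"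
    and central: "\<And>x g. x \<in> kernel G H h \<Longrightarrow> g \<in> carrier G \<Longrightarrow> g \<otimes> x = x \<otimes> g"
  obtains \<phi> where "\<phi> \<in> iso (H\<lparr>carrier := S\<rparr> \<times>\<times> G\<lparr>carrier := kernel G H h\<rparr>)
                       ((G \<times>\<times> G)\<lparr>carrier := diag_pullback S\<rparr> Mod diag (kernel G H h))"
    and "\<And>x. x \<in> diag_pullback S \<Longrightarrow> \<phi> (pullback_coords x) = diag (kernel G H h) #>\<^bsub>G \<times>\<times> G\<^esub> x"
proof -
  let ?A = "(G \<times>\<times> G)\<lparr>carrier := diag_pullback S\<rparr>"
  let ?B = "H\<lparr>carrier := S\<rparr> \<times>\<times> G\<lparr>carrier := kernel G H h\<rparr>"
  interpret coords: group_hom ?A ?B pullback_coords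
  proof (intro group_hom.intro group_hom_axioms.intro)
    show "group ?A"
      using subgroup_diag_pullback[OF assms(1)] DirProd_group[OF G.is_group G.is_group]
      by (rule subgroup.subgroup_is_group)
    show "group ?B"
      using DirProd_group[OF subgroup.subgroup_is_group[OF assms(1) H.is_group]
          subgroup.subgroup_is_group[OF subgroup_kernel G.is_group]] .
    show "pullback_coords \<in> hom ?A ?B"
      using pullback_coords_hom[OF central] .
  qed
  have "pullback_coords ` carrier ?A = carrier ?B"
    using pullback_coords_image[OF assms(2)] by simp
  from coords.FactGroup_inv_iso[OF this] obtain \<phi>
    where "\<phi> \<in> iso ?B (?A Mod diag (kernel G H h))"
      and "\<And>x. x \<in> carrier ?A \<Longrightarrow> \<phi> (pullback_coords x) = diag (kernel G H h) #>\<^bsub>?A\<^esub> x"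
    unfolding kernel_pullback_coords[OF assms(1)] by blast
  then show ?thesis
    using that by (simp add: r_coset_def)
qed

theorem lemma3p5:
  fixes G' :: "('a, 'm) monoid_scheme" and G :: "('b, 'n) monoid_scheme"
    and p :: "'a \<Rightarrow> 'b" and c :: 'a and H :: "'b set"
    and \<Delta> :: "('a \<times> 'a) set" and Q :: "('a \<times> 'a) set monoid"
    and P :: "('a \<times> 'a) set set" and C :: "'a set"
  assumes "group G'" and "group G"
    and "p \<in> hom G' G" and "p ` carrier G' = carrier G"
    and "c \<in> carrier G'"
    and "kernel G' G p = generate G' {c}"
    and "card (kernel G' G p) = 2"
    and "subgroup H G"
    and "\<Delta> = generate (DirProd G' G') {(c, c)}"
    and "Q = DirProd G' G' Mod \<Delta>"
    and "P = {S. S \<in> carrier Q \<and> nat_sq_map p S \<in> diag H}"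
    and "C = kernel G' G p"
  shows "\<exists>\<phi>. \<phi> \<in> iso (DirProd (G\<lparr>carrier := H\<rparr>) (G'\<lparr>carrier := C\<rparr>)) (Q\<lparr>carrier := P\<rparr>)
            \<and> (\<forall>x\<in>C. \<phi> (\<one>\<^bsub>G\<^esub>, x) = \<Delta> #>\<^bsub>DirProd G' G'\<^esub> (\<one>\<^bsub>G'\<^esub>, x))
            \<and> (\<forall>h\<in>H. \<forall>x\<in>C. fst (nat_sq_map p (\<phi> (h, x))) = h)"
proof -
  interpret p: group_hom G' G p
    using assms(1-3) by (simp add: group_hom_def group_hom_axioms_def)
  have "diag {c} = {(c, c)}" by (auto simp: diag_def)
  then have \<Delta>_eq: "\<Delta> = diag C"
    using group.generate_diag[OF assms(1), of "{c}"] assms(5,6,9,12) by simp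
  have H_sub: "H \<subseteq> p ` carrier G'"
    using subgroup.subset[OF assms(8)] assms(4) by simp
  have central: "\<And>x g. x \<in> kernel G' G p \<Longrightarrow> g \<in> carrier G' \<Longrightarrow> g \<otimes>\<^bsub>G'\<^esub> x = x \<otimes>\<^bsub>G'\<^esub> g"
    using group.normal_card_2_central[OF assms(1) p.normal_kernel assms(7)] by blast
  obtain \<phi> where \<phi>_iso: "\<phi> \<in> iso (G\<lparr>carrier := H\<rparr> \<times>\<times> G'\<lparr>carrier := C\<rparr>)
                               ((G' \<times>\<times> G')\<lparr>carrier := p.diag_pullback H\<rparr> Mod \<Delta>)"
    and \<phi>_coords: "\<And>x. x \<in> p.diag_pullback H \<Longrightarrow> \<phi> (p.pullback_coords x) = \<Delta> #>\<^bsub>G' \<times>\<times> G'\<^esub> x"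
    using p.FactGroup_diag_pullback_iso[OF assms(8) H_sub central]
    unfolding \<Delta>_eq assms(12) by blast
  have "Q\<lparr>carrier := P\<rparr> = (G' \<times>\<times> G')\<lparr>carrier := p.diag_pullback H\<rparr> Mod \<Delta>"
    using p.FactGroup_diag_pullback[OF assms(8)] assms(10-12) \<Delta>_eq by simp
  show ?thesis
  proof (intro exI conjI ballI)
    show "\<phi> \<in> iso (G\<lparr>carrier := H\<rparr> \<times>\<times> G'\<lparr>carrier := C\<rparr>) (Q\<lparr>carrier := P\<rparr>)"
      using \<phi>_iso \<open>Q\<lparr>carrier := P\<rparr> = _\<close> by simp
  next
    fix x assume "x \<in> C"
    then show "\<phi> (\<one>\<^bsub>G\<^esub>, x) = \<Delta> #>\<^bsub>G' \<times>\<times> G'\<^esub> (\<one>\<^bsub>G'\<^esub>, x)"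
      using \<phi>_coords[of "(\<one>\<^bsub>G'\<^esub>, x)"] subgroup.one_closed[OF assms(8)] assms(12)
      by (simp add: p.diag_pullback_def p.pullback_coords_def diag_def kernel_def)
  next
    fix h x assume "h \<in> H" "x \<in> C"
    then obtain a b where ab: "(a, b) \<in> p.diag_pullback H" "p.pullback_coords (a, b) = (h, x)"
      using p.pullback_coords_image[OF H_sub] assms(12) by force
    then show "fst (nat_sq_map p (\<phi> (h, x))) = h"
      using \<phi>_coords[OF ab(1)] p.nat_sq_map_diag_kernel_coset \<Delta>_eq assms(12)
      by (auto simp: p.diag_pullback_def p.pullback_coords_def)
  qed
qed

end
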